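(* Let $1\leq i\leq n-2$ and $k=\lceil n/(n-i)\rceil$. There exist $i$-dimensional linear subspaces $H_1,\dots,H_k$ of $\mathbb{R}^n$ such that all of the following hold: (i) $H_1^\perp+\cdots+H_k^\perp=\mathbb{R}^n$, and $\{H_1^\perp,\dots,H_k^\perp\}$ cannot be partitioned into two nonempty mutually orthogonal subsets; (ii) if $E\subset S^{n-1}$ is nonempty, closed, and $S^{n-1}\cap(H_j^\perp+x)\subset E$ for all $j=1,\dots,k$ and $x\in E$, then $E=S^{n-1}$; (iii) if $F\subset\mathbb{R}^n$ is closed and invariant under every rotation fixing $H_j$, for each $j$, then $F$ is a union of spheres centered at the origin; (iv) if $K$ is a convex body rotationally symmetric with respect to each $H_j$, then $K$ is a ball centered at the origin.
   Context: $H^\perp$ is the orthogonal complement; $S^{n-1}$ the unit sphere. A rotation fixing $H$ is an element of $SO(n)$ acting as the identity on $H$. A set $X$ is rotationally symmetric with respect to an $i$-dimensional subspace $H$ if for every $x\in H$, $X\cap(H^\perp+x)$ is a union of $(n-i-1)$-dimensional spheres centered at $x$. Two families of subspaces are mutually orthogonal if every subspace of one is orthogonal to every subspace of the other. A convex body is a compact convex set with nonempty interior. *)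

theory Defs
  imports "HOL-Analysis.Analysis"
begin

definition rotation_fixing :: "real^'n^'n \<Rightarrow> (real^'n) set \<Rightarrow> bool" where
  "rotation_fixing Q H \<longleftrightarrow> rotation_matrix Q \<and> (\<forall>h\<in>H. Q *v h = h)"

definition rot_sym :: "(real^'n) set \<Rightarrow> (real^'n) set \<Rightarrow> bool" where
  "rot_sym H X \<longleftrightarrow> (\<forall>x\<in>H. \<exists>R::real set. R \<subseteq> {0..} \<and>
      X \<inter> ((\<lambda>v. v + x) ` (H\<^sup>\<bottom>)) = (\<Union>r\<in>R. {v + x | v. v \<in> H\<^sup>\<bottom> \<and> norm v = r}))"

definition convex_body :: "(real^'n) set \<Rightarrow> bool" where
  "convex_body K \<longleftrightarrow> compact K \<and> convex K \<and> interior K \<noteq> {}"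

end

(* Write m = n - i, so 2 <= m < n, and take H_j = W_j^\<bottom>, where W_1 is spanned by the
   coordinate vectors e_0, ..., e_(m-1) and, for 2 <= j <= k, W_j is spanned by the vectors
   e_0 + e_a with a running through a block of m consecutive indices; as k m >= n these blocks
   cover the indices m, ..., n-1.

   Call x |-> z a step if z - x lies in some W_j and |z| = |x|. Every x is joined to |x| e_0 by
   steps: a step in W_1 empties coordinate 0, after which the reflection in e_0 + e_t (a vector of
   some W_j) empties coordinate t; once the coordinates m, ..., n-1 are cleared we are in W_1.
   Hence steps connect any two points of equal norm. The hypotheses of (ii)-(iv) each make the set
   in question closed under steps -- for (iii) because a step inside the W_j, of dimension at least
   2, is performed by a rotation fixing H_j, the product of two reflections -- so the set is a
   union of spheres about the origin, and a convex body of this kind is a ball. For (i), joining -x to x shows that the W_j span R^n, and e_0 is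
   orthogonal to no W_j, so the family has no orthogonal splitting. *)

theory Submission
  imports Defs
begin

section \<open>Linear algebra\<close>

lemma dim_orthogonal_comp:
  fixes U :: "'a::euclidean_space set"
  assumes "subspace U"
  shows "dim (U\<^sup>\<bottom>) = DIM('a) - dim U"
proof -
  have "dim {y \<in> UNIV. \<forall>x\<in>U. orthogonal x y} + dim U = dim (UNIV :: 'a set)"
    by (rule dim_subspace_orthogonal_to_vectors) (auto simp: assms)
  moreover have "{y \<in> UNIV. \<forall>x\<in>U. orthogonal x y} = U\<^sup>\<bottom>"
    by (auto simp: orthogonal_comp_def)
  ultimately show ?thesis by simp
qed

lemma dim_span_biorthogonal:
  fixes v w :: "'i \<Rightarrow> 'a::euclidean_space"
  assumes "finite A" and biorth: "\<And>a b. a \<in> A \<Longrightarrow> b \<in> A \<Longrightarrow> v a \<bullet> w b = (if a = b then 1 else 0)"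
  shows "dim (span (v ` A)) = card A"
proof -
  have inj: "inj_on v A"
  proof (rule inj_onI)
    fix a b assume "a \<in> A" "b \<in> A" "v a = v b"
    then have "v a \<bullet> w b = 1" using biorth[of b b] by simp
    then show "a = b" using biorth[of a b] \<open>a \<in> A\<close> \<open>b \<in> A\<close> by (simp split: if_splits)
  qed
  have "independent (v ` A)"
  proof (rule independent_if_scalars_zero)
    fix f y assume sum: "(\<Sum>x\<in>v ` A. f x *\<^sub>R x) = 0" and "y \<in> v ` A"
    then obtain b where b: "b \<in> A" "y = v b" by blast
    have "0 = (\<Sum>x\<in>v ` A. f x *\<^sub>R x) \<bullet> w b" by (simp add: sum)
    also have "\<dots> = (\<Sum>a\<in>A. f (v a) * (v a \<bullet> w b))"
      by (simp add: sum.reindex[OF inj] inner_sum_left)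
    also have "\<dots> = f y"
      using b assms(1) by (simp add: biorth if_distrib[of "(*) _"] cong: if_cong)
    finally show "f y = 0" by simp
  qed (use assms(1) in simp)
  then show ?thesis
    by (simp add: dim_eq_card_independent card_image[OF inj])
qed

lemma norm_add_eq_norm:
  fixes x d :: "'a::real_inner"
  assumes "2 * (x \<bullet> d) + d \<bullet> d = 0"
  shows "norm (x + d) = norm x"
proof -
  have "(x + d) \<bullet> (x + d) = x \<bullet> x"
    using assms by (simp add: inner_add inner_commute algebra_simps)
  then show ?thesis by (simp add: norm_eq_sqrt_inner)
qed

lemma common_nonorthogonal_vector_no_orthogonal_split:
  assumes "u \<in> U" "U \<in> \<V>" and nonorth: "\<And>V. V \<in> \<V> \<Longrightarrow> \<exists>v\<in>V. \<not> orthogonal u v"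
  shows "\<not> (\<exists>A\<subseteq>\<V>. A \<noteq> {} \<and> \<V> - A \<noteq> {} \<and> (\<forall>U\<in>A. \<forall>V\<in>\<V> - A. \<forall>u\<in>U. \<forall>v\<in>V. orthogonal u v))"
proof
  assume "\<exists>A\<subseteq>\<V>. A \<noteq> {} \<and> \<V> - A \<noteq> {} \<and> (\<forall>U\<in>A. \<forall>V\<in>\<V> - A. \<forall>u\<in>U. \<forall>v\<in>V. orthogonal u v)"
  then obtain A where A: "A \<subseteq> \<V>" "A \<noteq> {}" "\<V> - A \<noteq> {}"
    and orth: "\<forall>U\<in>A. \<forall>V\<in>\<V> - A. \<forall>u\<in>U. \<forall>v\<in>V. orthogonal u v"
    by blast
  show False
  proof (cases "U \<in> A")
    case True
    obtain V where "V \<in> \<V> - A" using A(3) by blast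
    then show False using nonorth orth True assms(1) by blast
  next
    case False
    obtain V where "V \<in> A" using A(2) by blast
    moreover obtain v where "v \<in> V" "\<not> orthogonal u v" using nonorth A(1) calculation by blast
    moreover have "U \<in> \<V> - A" using False assms(2) by blast
    ultimately show False using orth assms(1) by (metis orthogonal_commute)
  qed
qed

lemma axis_reflection_matrix_exists:
  fixes c :: "'n::finite"
  obtains D :: "real^'n^'n" where "rotoinversion_matrix D" "\<And>y. D *v y = y - (2 * y $ c) *\<^sub>R axis c 1"
proof -
  define D :: "real^'n^'n" where "D = (\<chi> i j. if i = j then (if i = c then -1 else 1) else 0)"
  have "D ** D = mat 1" "transpose D = D"
    by (auto simp: D_def matrix_matrix_mult_def mat_def transpose_def vec_eq_iff
        if_distrib[of "\<lambda>x. x * _"] sum.delta cong: if_cong)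
  then have "orthogonal_matrix D" by (simp add: orthogonal_matrix_def)
  moreover have "det D = -1"
  proof -
    have "det D = (\<Prod>i\<in>UNIV. D $ i $ i)" by (rule det_diagonal) (simp add: D_def)
    also have "\<dots> = (\<Prod>i\<in>UNIV. if i = c then -1 else 1)" by (simp add: D_def)
    also have "\<dots> = -1" by (simp add: prod.If_cases)
    finally show ?thesis .
  qed
  moreover have "D *v y = y - (2 * y $ c) *\<^sub>R axis c 1" for y
    by (auto simp: D_def matrix_vector_mult_def vec_eq_iff axis_def
        if_distrib[of "\<lambda>x. x * _"] sum.delta cong: if_cong)
  ultimately show thesis using that by (simp add: rotoinversion_matrix_def)
qed

lemma reflection_matrix_exists:
  fixes u :: "real^'n"
  assumes "u \<noteq> 0"
  obtains M where "rotoinversion_matrix M" "\<And>v. M *v v = v - (2 * (v \<bullet> u) / (u \<bullet> u)) *\<^sub>R u"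
proof -
  obtain c :: 'n where True by simp
  define a where "a = u /\<^sub>R norm u"
  have "norm a = 1" using assms by (simp add: a_def)
  then obtain P where P: "orthogonal_matrix P" "P *v axis c 1 = a"
    using orthogonal_matrix_exists_basis by metis
  obtain D :: "real^'n^'n" where D: "rotoinversion_matrix D" "\<And>y. D *v y = y - (2 * y $ c) *\<^sub>R axis c 1"
    using axis_reflection_matrix_exists by blast
  define M where "M = P ** D ** transpose P"
  have "rotoinversion_matrix M"
  proof -
    have "det P * det P = 1" using det_orthogonal_matrix[OF P(1)] by auto
    then show ?thesis
      using D(1) P(1) unfolding M_def rotoinversion_matrix_def
      by (simp add: det_mul orthogonal_matrix_mul orthogonal_matrix_transpose)
  qed
  moreover have "M *v v = v - (2 * (v \<bullet> a)) *\<^sub>R a" for v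
  proof -
    have Pt: "(transpose P *v v) $ c = v \<bullet> a"
    proof -
      have "a = (\<chi> i. P $ i $ c)" using P(2) by (simp add: matrix_vector_mult_basis column_def)
      then show ?thesis
        by (simp add: transpose_def matrix_vector_mult_def inner_vec_def mult.commute)
    qed
    have PPt: "P *v (transpose P *v v) = v"
      using P(1) by (simp only: matrix_vector_mul_assoc orthogonal_matrix_def matrix_vector_mul_lid)
    have "M *v v = P *v (D *v (transpose P *v v))"
      by (simp only: M_def matrix_vector_mul_assoc matrix_mul_assoc)
    also have "\<dots> = P *v (transpose P *v v - (2 * (v \<bullet> a)) *\<^sub>R axis c 1)"
      by (simp only: D(2) Pt)
    also have "\<dots> = v - (2 * (v \<bullet> a)) *\<^sub>R a"
      by (simp only: matrix_vector_mult_diff_distrib matrix_vector_mult_scaleR PPt P(2))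
    finally show ?thesis .
  qed
  moreover have "(2 * (v \<bullet> a)) *\<^sub>R a = (2 * (v \<bullet> u) / (u \<bullet> u)) *\<^sub>R u" for v
    using assms by (simp add: a_def power2_norm_eq_inner[symmetric] power2_eq_square field_simps)
  ultimately show ?thesis using that by simp
qed

lemma subspace_orthogonal_vector_exists:
  fixes V :: "'a::euclidean_space set"
  assumes "subspace V" "2 \<le> dim V"
  obtains w where "w \<in> V" "w \<noteq> 0" "z \<bullet> w = 0"
proof -
  obtain zV zP where zV: "zV \<in> span V" and zP: "\<And>w. w \<in> span V \<Longrightarrow> orthogonal zP w"
    and z: "z = zV + zP"
    using orthogonal_subspace_decomp_exists[of V z] by metis
  have "span {zV} \<subset> span V"
  proof
    show "span {zV} \<subseteq> span V" using zV by (simp add: span_minimal)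
    have "dim (span {zV}) \<le> 1" using dim_le_card[of "span {zV}" "{zV}"] by simp
    then show "span {zV} \<noteq> span V" using assms by (auto simp: span_eq_iff[THEN iffD2])
  qed
  then obtain w where w: "w \<noteq> 0" "w \<in> span V" "\<And>y. y \<in> span {zV} \<Longrightarrow> orthogonal w y"
    using orthogonal_to_subspace_exists_gen by metis
  have "w \<bullet> zV = 0" "zP \<bullet> w = 0"
    using w(3)[of zV] zP[OF w(2)] by (simp_all add: span_base orthogonal_def)
  then have "z \<bullet> w = 0" by (simp add: z inner_add_left inner_add_right inner_commute)
  then show ?thesis
    using that w(1,2) assms(1) by (simp add: span_eq_iff[THEN iffD2])
qed

text \<open>The product of the reflections in \<open>x - z\<close> and in a vector of \<open>V\<close> orthogonal to \<open>z\<close>.\<close>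
lemma rotation_fixing_orthogonal_comp_exists:
  fixes V :: "(real^'n) set"
  assumes V: "subspace V" "2 \<le> dim V" and "x - z \<in> V" "norm x = norm z"
  obtains Q where "rotation_fixing Q (V\<^sup>\<bottom>)" "Q *v x = z"
proof (cases "x = z")
  case True
  have "rotation_fixing (mat 1) (V\<^sup>\<bottom>)"
    by (simp add: rotation_fixing_def rotation_matrix_def orthogonal_matrix_id det_I)
  then show ?thesis using that True by (simp add: matrix_vector_mul_lid)
next
  case False
  define u where "u = x - z"
  have "u \<noteq> 0" using False by (simp add: u_def)
  then obtain Mu where Mu: "rotoinversion_matrix Mu"
    "\<And>v. Mu *v v = v - (2 * (v \<bullet> u) / (u \<bullet> u)) *\<^sub>R u"
    using reflection_matrix_exists by metis
  have "u \<bullet> u = 2 * (x \<bullet> u)"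
    using assms(4) by (simp add: u_def norm_eq_sqrt_inner inner_diff_left inner_diff_right inner_commute)
  moreover have "u \<bullet> u \<noteq> 0" using \<open>u \<noteq> 0\<close> by simp
  ultimately have Mux: "Mu *v x = z" by (simp add: Mu(2) u_def)
  obtain w where w: "w \<in> V" "w \<noteq> 0" "z \<bullet> w = 0"
    using subspace_orthogonal_vector_exists[OF V] by metis
  then obtain Mw where Mw: "rotoinversion_matrix Mw"
    "\<And>v. Mw *v v = v - (2 * (v \<bullet> w) / (w \<bullet> w)) *\<^sub>R w"
    using reflection_matrix_exists by metis
  define Q where "Q = Mw ** Mu"
  have "rotation_fixing Q (V\<^sup>\<bottom>)"
    unfolding rotation_fixing_def rotation_matrix_def
  proof (intro conjI ballI)
    show "orthogonal_matrix Q" "det Q = 1"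
      using Mu(1) Mw(1) by (simp_all add: Q_def rotoinversion_matrix_def orthogonal_matrix_mul det_mul)
    fix h assume "h \<in> V\<^sup>\<bottom>"
    then have "h \<bullet> u = 0" "h \<bullet> w = 0"
      using assms(3) w(1) by (auto simp: u_def orthogonal_comp_def orthogonal_def inner_commute)
    then show "Q *v h = h" by (simp add: Q_def matrix_vector_mul_assoc[symmetric] Mu(2) Mw(2))
  qed
  moreover have "Q *v x = z"
    by (simp add: Q_def matrix_vector_mul_assoc[symmetric] Mux Mw(2) w(3))
  ultimately show ?thesis using that by blast
qed

section \<open>Steps of constant norm along a family of subspaces\<close>

definition sphere_step :: "'a::real_normed_vector set set \<Rightarrow> 'a \<Rightarrow> 'a \<Rightarrow> bool" where
  "sphere_step \<V> x z \<longleftrightarrow> (\<exists>V\<in>\<V>. z - x \<in> V) \<and> norm z = norm x"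

definition sphere_transitive :: "'a::real_normed_vector set set \<Rightarrow> bool" where
  "sphere_transitive \<V> \<longleftrightarrow> (\<forall>x y. norm x = norm y \<longrightarrow> (sphere_step \<V>)\<^sup>*\<^sup>* x y)"

lemma sphere_steps_norm: "(sphere_step \<V>)\<^sup>*\<^sup>* x z \<Longrightarrow> norm z = norm x"
  by (induction rule: rtranclp_induct) (auto simp: sphere_step_def)

lemma sphere_steps_sym:
  assumes "\<And>V. V \<in> \<V> \<Longrightarrow> subspace V" and "(sphere_step \<V>)\<^sup>*\<^sup>* x z"
  shows "(sphere_step \<V>)\<^sup>*\<^sup>* z x"
proof -
  have "symp (sphere_step \<V>)"
    by (rule sympI) (metis assms(1) minus_diff_eq sphere_step_def subspace_neg)
  then show ?thesis
    using assms(2) by (metis symp_rtranclp sympD)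
qed

lemma sphere_steps_diff_in_span: "(sphere_step \<V>)\<^sup>*\<^sup>* x z \<Longrightarrow> z - x \<in> span (\<Union>\<V>)"
proof (induction rule: rtranclp_induct)
  case (step y z)
  then have "z - y \<in> span (\<Union>\<V>)"
    by (auto simp: sphere_step_def intro: span_base)
  then have "(z - y) + (y - x) \<in> span (\<Union>\<V>)"
    using step.IH by (rule span_add)
  then show ?case by simp
qed (simp add: span_zero)

lemma sphere_transitive_span_UNIV:
  assumes "sphere_transitive \<V>"
  shows "span (\<Union>\<V>) = UNIV"
proof -
  have "y \<in> span (\<Union>\<V>)" for y
  proof -
    have "(sphere_step \<V>)\<^sup>*\<^sup>* (- y) y"
      using assms by (simp add: sphere_transitive_def)
    then have "y - (- y) \<in> span (\<Union>\<V>)"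
      by (rule sphere_steps_diff_in_span)
    then have "(1/2) *\<^sub>R (y - (- y)) \<in> span (\<Union>\<V>)"
      by (rule span_mul)
    then show ?thesis
      by (simp flip: scaleR_2)
  qed
  then show ?thesis by auto
qed

lemma sphere_transitive_saturates:
  assumes "sphere_transitive \<V>" and closed: "\<And>x z. x \<in> S \<Longrightarrow> sphere_step \<V> x z \<Longrightarrow> z \<in> S"
    and "x \<in> S" "norm y = norm x"
  shows "y \<in> S"
proof -
  have "(sphere_step \<V>)\<^sup>*\<^sup>* x y"
    using assms(1,4) by (simp add: sphere_transitive_def)
  then show ?thesis
    by (induction rule: rtranclp_induct) (auto intro: assms(3) closed)
qed

lemma norm_saturated_Union_spheres:
  fixes S :: "'a::real_normed_vector set"
  assumes "\<And>x y. x \<in> S \<Longrightarrow> norm y = norm x \<Longrightarrow> y \<in> S"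
  shows "S = (\<Union>r\<in>norm ` S. sphere 0 r)"
proof (intro set_eqI iffI)
  fix y :: 'a assume "y \<in> (\<Union>r\<in>norm ` S. sphere 0 r)"
  then obtain x where "x \<in> S" "norm y = norm x" by auto
  then show "y \<in> S" by (rule assms)
qed auto

lemma sphere_transitive_sphere_eq:
  assumes "sphere_transitive \<V>" "E \<subseteq> sphere 0 1" "E \<noteq> {}"
    and slices: "\<And>V x. V \<in> \<V> \<Longrightarrow> x \<in> E \<Longrightarrow> sphere 0 1 \<inter> (\<lambda>v. v + x) ` V \<subseteq> E"
  shows "E = sphere 0 1"
proof
  obtain x0 where x0: "x0 \<in> E" using assms(3) by auto
  have "z \<in> E" if x: "x \<in> E" and step: "sphere_step \<V> x z" for x z
  proof -
    obtain V where "V \<in> \<V>" "z - x \<in> V" "norm z = norm x"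
      using step by (auto simp: sphere_step_def)
    moreover have "z \<in> sphere 0 1 \<inter> (\<lambda>v. v + x) ` V"
      using calculation assms(2) x by (force intro: image_eqI[of _ _ "z - x"])
    ultimately show ?thesis using slices x by blast
  qed
  then show "sphere 0 1 \<subseteq> E"
    using sphere_transitive_saturates[OF assms(1) _ x0] x0 assms(2) by force
qed (rule assms(2))

lemma rotation_invariant_step_closed:
  assumes "subspace V" "2 \<le> dim V"
    and invariant: "\<And>Q. rotation_fixing Q (V\<^sup>\<bottom>) \<Longrightarrow> (\<lambda>y. Q *v y) ` F \<subseteq> F"
    and "x \<in> F" "z - x \<in> V" "norm z = norm x"
  shows "z \<in> F"
proof -
  have "x - z \<in> V" using assms(1,5) by (metis minus_diff_eq subspace_neg)
  then obtain Q where "rotation_fixing Q (V\<^sup>\<bottom>)" "Q *v x = z"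
    using rotation_fixing_orthogonal_comp_exists[OF assms(1,2) _ assms(6)[symmetric]] by blast
  then show ?thesis using invariant assms(4) by blast
qed

lemma rot_sym_step_closed:
  assumes V: "subspace V" and "rot_sym (V\<^sup>\<bottom>) K" "x \<in> K" "z - x \<in> V" "norm z = norm x"
  shows "z \<in> K"
proof -
  obtain v h where v: "v \<in> V" and h: "h \<in> V\<^sup>\<bottom>" and x: "x = v + h"
    using subspace_sum_orthogonal_comp[OF V] set_plus_elim by blast
  from assms(2) h obtain R where R: "K \<inter> (\<lambda>y. y + h) ` V = (\<Union>r\<in>R. {y + h |y. y \<in> V \<and> norm y = r})"
    unfolding rot_sym_def orthogonal_comp_self[OF V] by blast
  define v' where "v' = v + (z - x)"
  have v': "v' \<in> V" "z = v' + h"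
    using subspace_add[OF V v assms(4)] by (simp_all add: v'_def x)
  have "orthogonal v h" "orthogonal v' h"
    using v v' h by (auto simp: orthogonal_comp_def orthogonal_commute)
  then have "(norm v')\<^sup>2 + (norm h)\<^sup>2 = (norm v)\<^sup>2 + (norm h)\<^sup>2"
    using norm_add_Pythagorean[of v' h] norm_add_Pythagorean[of v h] assms(5) x v'(2) by simp
  then have "norm v' = norm v" by (simp add: power2_eq_iff_nonneg)
  moreover have "x \<in> K \<inter> (\<lambda>y. y + h) ` V" using assms(3) v x by auto
  ultimately have "z \<in> (\<Union>r\<in>R. {y + h |y. y \<in> V \<and> norm y = r})"
    using R v' x by auto
  then show ?thesis using R by blast
qed

lemma convex_norm_saturated_cball_subset:
  fixes K :: "'a::{real_normed_vector, perfect_space} set"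
  assumes "convex K" and saturated: "\<And>x y. x \<in> K \<Longrightarrow> norm y = norm x \<Longrightarrow> y \<in> K" and "x \<in> K"
  shows "cball 0 (norm x) \<subseteq> K"
proof
  fix y :: 'a assume "y \<in> cball 0 (norm x)"
  then have y: "norm y \<le> norm x" by simp
  show "y \<in> K"
  proof (cases "x = 0")
    case True
    then show ?thesis using y \<open>x \<in> K\<close> by simp
  next
    case False
    define r where "r = norm x"
    have "r > 0" using False by (simp add: r_def)
    obtain u where u: "norm u = 1" "y = norm y *\<^sub>R u"
    proof (cases "y = 0")
      case True
      obtain u :: 'a where "norm u = 1" using vector_choose_size[of 1] by auto
      with True show ?thesis by (intro that[of u]) simp_all
    next
      case False
      then show ?thesis by (intro that[of "y /\<^sub>R norm y"]) auto
    qed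
    define t where "t = (r + norm y) / (2 * r)"
    have "r *\<^sub>R u \<in> K" "- (r *\<^sub>R u) \<in> K"
      using saturated[OF \<open>x \<in> K\<close>] u(1) \<open>r > 0\<close> by (auto simp: r_def)
    moreover have "t \<in> {0..1}" using y \<open>r > 0\<close> by (simp add: t_def r_def field_simps)
    ultimately have "t *\<^sub>R (r *\<^sub>R u) + (1 - t) *\<^sub>R (- (r *\<^sub>R u)) \<in> K"
      using \<open>convex K\<close> by (intro convexD) auto
    moreover have "t *\<^sub>R (r *\<^sub>R u) + (1 - t) *\<^sub>R (- (r *\<^sub>R u)) = (t * r - (1 - t) * r) *\<^sub>R u"
      by (simp add: scaleR_left_diff_distrib)
    moreover have "t * r - (1 - t) * r = norm y"
      using \<open>r > 0\<close> by (simp add: t_def field_simps)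
    ultimately show ?thesis using u(2) by simp
  qed
qed

lemma convex_body_norm_saturated_eq_cball:
  assumes K: "convex_body K" and saturated: "\<And>x y. x \<in> K \<Longrightarrow> norm y = norm x \<Longrightarrow> y \<in> K"
  shows "\<exists>r>0. K = cball 0 r"
proof -
  have "compact K" "convex K" "interior K \<noteq> {}" using K by (auto simp: convex_body_def)
  then have "K \<noteq> {}" using interior_subset by blast
  then obtain x where x: "x \<in> K" "\<And>y. y \<in> K \<Longrightarrow> dist 0 y \<le> dist 0 x"
    using distance_attains_sup[OF \<open>compact K\<close>, of 0] by blast
  then have "K = cball 0 (norm x)"
    using convex_norm_saturated_cball_subset[OF \<open>convex K\<close> saturated] by force
  moreover have "norm x > 0"
  proof (rule ccontr)
    assume "\<not> norm x > 0"
    then have "K = {0}" using \<open>K = cball 0 (norm x)\<close> by simp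
    then show False using \<open>interior K \<noteq> {}\<close> by simp
  qed
  ultimately show ?thesis by blast
qed

locale bridged_blocks =
  fixes enum :: "nat \<Rightarrow> 'n::finite" and m k :: nat
  assumes enum: "bij_betw enum {0..<CARD('n)} UNIV"
    and two_le_m: "2 \<le> m" and m_less_card: "m < CARD('n)" and card_le: "CARD('n) \<le> k * m"
begin

definition e :: "nat \<Rightarrow> real^'n" where
  "e a = axis (enum a) 1"

text \<open>The last block is shifted down so that it ends at index \<open>CARD('n) - 1\<close>; it may overlap
  the previous one.\<close>
definition block_start :: "nat \<Rightarrow> nat" where
  "block_start j = min ((j - 1) * m) (CARD('n) - m)"

definition W :: "nat \<Rightarrow> (real^'n) set" where
  "W j = (if j = 1 then span (e ` {0..<m})
          else span ((\<lambda>a. e 0 + e a) ` {block_start j..<block_start j + m}))"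

lemma e_component: "a < CARD('n) \<Longrightarrow> b < CARD('n) \<Longrightarrow> e a $ enum b = (if a = b then 1 else 0)"
  using bij_betw_imp_inj_on[OF enum] by (auto simp: e_def axis_def dest: inj_onD)

lemma inner_e: "x \<bullet> e a = x $ enum a"
  by (simp add: e_def inner_axis)

lemma coordinate_expansion: "x = (\<Sum>a<CARD('n). (x $ enum a) *\<^sub>R e a)"
proof -
  have "x = (\<Sum>i\<in>UNIV. (x $ i) *s axis i 1)" by (simp add: basis_expansion)
  also have "\<dots> = (\<Sum>a\<in>{0..<CARD('n)}. (x $ enum a) *\<^sub>R e a)"
    by (simp add: sum.reindex_bij_betw[OF enum, symmetric] e_def scalar_mult_eq_scaleR)
  finally show ?thesis by (simp add: atLeast0LessThan)
qed

lemma subspace_W: "subspace (W j)"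
  by (simp add: W_def)

lemma block_start_pos: "2 \<le> j \<Longrightarrow> 1 \<le> block_start j"
  using two_le_m m_less_card by (cases j) (auto simp: block_start_def)

lemma block_end: "block_start j + m \<le> CARD('n)"
  using m_less_card by (simp add: block_start_def)

lemma dim_W:
  assumes "1 \<le> j"
  shows "dim (W j) = m"
proof (cases "j = 1")
  case True
  have "dim (span (e ` {0..<m})) = card {0..<m}"
    by (rule dim_span_biorthogonal[where w = e]) (use m_less_card in \<open>auto simp: inner_e e_component\<close>)
  then show ?thesis using True by (simp add: W_def)
next
  case False
  let ?B = "{block_start j..<block_start j + m}"
  have B: "1 \<le> b" "b < CARD('n)" if "b \<in> ?B" for b
    using that block_start_pos[of j] block_end[of j] False assms by auto
  have biorth: "(e 0 + e a) \<bullet> e b = (if a = b then 1 else 0)" if "a \<in> ?B" "b \<in> ?B" for a b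
    using B[OF that(1)] B[OF that(2)] by (simp add: inner_add_left inner_e e_component)
  have "dim (span ((\<lambda>a. e 0 + e a) ` ?B)) = card ?B"
    by (rule dim_span_biorthogonal[where w = e]) (simp_all add: biorth)
  then show ?thesis using False by (simp add: W_def)
qed

lemma e_in_W1: "a < m \<Longrightarrow> e a \<in> W 1"
  by (simp add: W_def span_base)

lemma bridge_in_W:
  assumes "m \<le> t" "t < CARD('n)"
  shows "\<exists>j\<in>{2..k}. e 0 + e t \<in> W j"
proof -
  define j where "j = t div m + 1"
  have "1 \<le> t div m" using div_le_mono[of m t m] two_le_m assms(1) by simp
  moreover have "t div m < k"
    using assms(2) card_le two_le_m by (simp add: div_less_iff_less_mult)
  ultimately have j: "j \<in> {2..k}" by (simp add: j_def)
  define b where "b = t div m * m"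
  have "b \<le> t" "t < b + m"
    using div_mult_mod_eq[of t m] mod_less_divisor[of m t] two_le_m unfolding b_def by linarith+
  moreover have "block_start j = min b (CARD('n) - m)"
    by (simp add: block_start_def j_def b_def)
  ultimately have "t \<in> {block_start j..<block_start j + m}"
    using assms(2) by (auto simp: min_def)
  then have "e 0 + e t \<in> W j"
    using j by (auto simp: W_def span_base)
  with j show ?thesis by blast
qed

lemma e0_not_orthogonal_W:
  assumes "j \<in> {1..k}"
  shows "\<exists>v\<in>W j. \<not> orthogonal (e 0) v"
proof (cases "j = 1")
  case True
  then show ?thesis
    using e_in_W1[of 0] two_le_m m_less_card
    by (intro bexI[of _ "e 0"]) (auto simp: orthogonal_def inner_e e_component)
next
  case False
  define s where "s = block_start j"
  have s: "1 \<le> s" "s < CARD('n)"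
    using block_start_pos[of j] block_end[of j] False assms two_le_m by (auto simp: s_def)
  have "e 0 + e s \<in> W j"
    using False two_le_m by (auto simp: W_def s_def intro!: span_base)
  moreover have "e 0 \<bullet> (e 0 + e s) = 1"
    using s by (simp add: inner_add_right inner_e e_component)
  ultimately show ?thesis by (intro bexI[of _ "e 0 + e s"]) (auto simp: orthogonal_def)
qed

abbreviation steps :: "real^'n \<Rightarrow> real^'n \<Rightarrow> bool" where
  "steps \<equiv> (sphere_step (W ` {1..k}))\<^sup>*\<^sup>*"

lemma k_pos: "1 \<le> k"
  using card_le m_less_card by (cases k) auto

lemma steps_W:
  assumes "j \<in> {1..k}" "z - x \<in> W j" "norm z = norm x"
  shows "steps x z"
proof -
  have "sphere_step (W ` {1..k}) x z"
    using assms unfolding sphere_step_def by blast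
  then show ?thesis by (rule r_into_rtranclp)
qed

lemma clear_coordinate_0:
  obtains z where "steps x z" "z $ enum 0 = 0"
    "\<And>c. 2 \<le> c \<Longrightarrow> c < CARD('n) \<Longrightarrow> z $ enum c = x $ enum c"
proof -
  have card: "0 < CARD('n)" "1 < CARD('n)" using two_le_m m_less_card by auto
  define p where "p = x $ enum 0"
  define q where "q = x $ enum 1"
  define s where "s = sqrt (p\<^sup>2 + q\<^sup>2)"
  define d where "d = (- p) *\<^sub>R e 0 + (s - q) *\<^sub>R e 1"
  have "e 0 \<in> W 1" "e 1 \<in> W 1"
    using e_in_W1[of 0] e_in_W1[of 1] two_le_m by auto
  then have "d \<in> W 1"
    unfolding d_def by (intro subspace_add subspace_scale subspace_W)
  moreover have "norm (x + d) = norm x"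
  proof (rule norm_add_eq_norm)
    have "s\<^sup>2 = p\<^sup>2 + q\<^sup>2"
      by (simp add: s_def sum_power2_ge_zero)
    then show "2 * (x \<bullet> d) + d \<bullet> d = 0"
      using card by (simp add: d_def inner_add inner_e e_component p_def q_def algebra_simps power2_eq_square)
  qed
  ultimately have "steps x (x + d)"
    using steps_W[of 1] k_pos by simp
  then show thesis
  proof (rule that)
    show "(x + d) $ enum 0 = 0" using card by (simp add: d_def e_component p_def)
    show "(x + d) $ enum c = x $ enum c" if "2 \<le> c" "c < CARD('n)" for c
      using card that by (simp add: d_def e_component)
  qed
qed

text \<open>The step is the reflection in the hyperplane orthogonal to \<open>e 0 + e t\<close>.\<close>
lemma clear_coordinate_via_0:
  assumes t: "m \<le> t" "t < CARD('n)" and x0: "x $ enum 0 = 0"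
  obtains z where "steps x z" "z $ enum t = 0"
    "\<And>c. 2 \<le> c \<Longrightarrow> c < CARD('n) \<Longrightarrow> c \<noteq> t \<Longrightarrow> z $ enum c = x $ enum c"
proof -
  obtain j where j: "j \<in> {2..k}" "e 0 + e t \<in> W j" using bridge_in_W[OF t] by blast
  have t0: "0 < t" using t two_le_m by auto
  define r where "r = x $ enum t"
  define z where "z = x + (- r) *\<^sub>R (e 0 + e t)"
  have "norm z = norm x"
    unfolding z_def
    by (rule norm_add_eq_norm) (use t t0 in \<open>simp add: inner_add inner_e e_component x0 r_def\<close>)
  moreover have "z - x \<in> W j"
    using subspace_scale[OF subspace_W j(2), of "- r"] by (simp add: z_def)
  ultimately have "steps x z"
    using steps_W[of j] j(1) by simp
  then show thesis
  proof (rule that)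
    show "z $ enum t = 0" using t t0 by (simp add: z_def e_component r_def)
    show "z $ enum c = x $ enum c" if "2 \<le> c" "c < CARD('n)" "c \<noteq> t" for c
      using t t0 that by (simp add: z_def e_component)
  qed
qed

lemma clear_coordinate:
  assumes t: "m \<le> t" "t < CARD('n)"
  obtains z where "steps x z" "z $ enum t = 0"
    "\<And>c. m \<le> c \<Longrightarrow> c < CARD('n) \<Longrightarrow> c \<noteq> t \<Longrightarrow> z $ enum c = x $ enum c"
proof -
  obtain y where y: "steps x y" "y $ enum 0 = 0"
    "\<And>c. 2 \<le> c \<Longrightarrow> c < CARD('n) \<Longrightarrow> y $ enum c = x $ enum c"
    using clear_coordinate_0 by blast
  obtain z where z: "steps y z" "z $ enum t = 0"
    "\<And>c. 2 \<le> c \<Longrightarrow> c < CARD('n) \<Longrightarrow> c \<noteq> t \<Longrightarrow> z $ enum c = y $ enum c"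
    using clear_coordinate_via_0[OF t y(2)] by blast
  show thesis
  proof (rule that)
    show "steps x z" using y(1) z(1) by (rule rtranclp_trans)
    show "z $ enum c = x $ enum c" if "m \<le> c" "c < CARD('n)" "c \<noteq> t" for c
      using that two_le_m y(3) z(3) by simp
  qed (rule z(2))
qed

lemma clear_coordinates:
  assumes "T \<subseteq> {m..<CARD('n)}"
  shows "\<exists>z. steps x z \<and> (\<forall>c\<in>T. z $ enum c = 0)"
proof -
  have "finite T" using assms finite_subset by blast
  then show ?thesis
    using assms
  proof (induction T rule: finite_induct)
    case (insert t T)
    then obtain z where z: "steps x z" "\<forall>c\<in>T. z $ enum c = 0" by auto
    obtain z' where z': "steps z z'" "z' $ enum t = 0"
      "\<And>c. m \<le> c \<Longrightarrow> c < CARD('n) \<Longrightarrow> c \<noteq> t \<Longrightarrow> z' $ enum c = z $ enum c"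
      using clear_coordinate[of t z] insert.prems by auto
    have "z' $ enum c = 0" if "c \<in> insert t T" for c
    proof (cases "c = t")
      case False
      with that insert.prems have "m \<le> c" "c < CARD('n)" "c \<in> T" by auto
      with False z(2) z'(3) show ?thesis by simp
    qed (use z'(2) in simp)
    with rtranclp_trans[OF z(1) z'(1)] show ?case by blast
  qed auto
qed

lemma steps_to_axis: "steps x (norm x *\<^sub>R e 0)"
proof -
  obtain z where z: "steps x z" "\<And>c. c \<in> {m..<CARD('n)} \<Longrightarrow> z $ enum c = 0"
    using clear_coordinates[of "{m..<CARD('n)}" x] by auto
  have "z = (\<Sum>a<CARD('n). (z $ enum a) *\<^sub>R e a)"
    by (rule coordinate_expansion)
  also have "\<dots> = (\<Sum>a<m. (z $ enum a) *\<^sub>R e a) + (\<Sum>a=m..<CARD('n). (z $ enum a) *\<^sub>R e a)"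
    using sum.atLeastLessThan_concat[of 0 m "CARD('n)" "\<lambda>a. (z $ enum a) *\<^sub>R e a"] m_less_card
    by (simp add: atLeast0LessThan)
  also have "\<dots> = (\<Sum>a<m. (z $ enum a) *\<^sub>R e a)"
    using z(2) by simp
  also have "\<dots> \<in> W 1"
    by (intro subspace_sum[OF subspace_W] subspace_scale[OF subspace_W] e_in_W1) simp
  finally have "z \<in> W 1" .
  moreover have "norm x *\<^sub>R e 0 \<in> W 1"
    using e_in_W1[of 0] two_le_m by (simp add: subspace_scale subspace_W)
  moreover have "norm (norm x *\<^sub>R e 0) = norm z"
    using sphere_steps_norm[OF z(1)] by (simp add: e_def)
  ultimately have "steps z (norm x *\<^sub>R e 0)"
    using steps_W[of 1] k_pos by (simp add: subspace_diff subspace_W)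
  with z(1) show ?thesis by (rule rtranclp_trans)
qed

lemma sphere_transitive_W: "sphere_transitive (W ` {1..k})"
  unfolding sphere_transitive_def
proof (intro allI impI)
  fix x y :: "real^'n" assume "norm x = norm y"
  then have "steps y (norm x *\<^sub>R e 0)" using steps_to_axis[of y] by simp
  then have "steps (norm x *\<^sub>R e 0) y"
    by (rule sphere_steps_sym[rotated]) (auto simp: subspace_W)
  with steps_to_axis[of x] show "steps x y" by (rule rtranclp_trans)
qed

definition H :: "nat \<Rightarrow> (real^'n) set" where
  "H j = (W j)\<^sup>\<bottom>"

lemma orthogonal_comp_H [simp]: "(H j)\<^sup>\<bottom> = W j"
  by (simp add: H_def orthogonal_comp_self subspace_W)

lemma subspace_H: "subspace (H j)"
  by (simp add: H_def subspace_orthogonal_comp)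

lemma dim_H: "1 \<le> j \<Longrightarrow> dim (H j) = CARD('n) - m"
  by (simp add: H_def dim_orthogonal_comp subspace_W dim_W)

lemma W_step_closed_saturated:
  assumes closed: "\<And>j x z. j \<in> {1..k} \<Longrightarrow> x \<in> S \<Longrightarrow> z - x \<in> W j \<Longrightarrow> norm z = norm x \<Longrightarrow> z \<in> S"
    and "x \<in> S" "norm y = norm x"
  shows "y \<in> S"
proof -
  have "z \<in> S" if "x \<in> S" "sphere_step (W ` {1..k}) x z" for x z
    using that closed by (auto simp: sphere_step_def)
  then show ?thesis
    by (rule sphere_transitive_saturates[OF sphere_transitive_W _ assms(2,3)])
qed

lemma span_orthogonal_comp_H: "span (\<Union>j\<in>{1..k}. (H j)\<^sup>\<bottom>) = UNIV"
  using sphere_transitive_span_UNIV[OF sphere_transitive_W] by simp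

lemma orthogonal_comp_H_no_orthogonal_split:
  "\<not> (\<exists>A \<subseteq> (\<lambda>j. (H j)\<^sup>\<bottom>) ` {1..k}. A \<noteq> {} \<and> (\<lambda>j. (H j)\<^sup>\<bottom>) ` {1..k} - A \<noteq> {} \<and>
      (\<forall>U\<in>A. \<forall>V\<in>(\<lambda>j. (H j)\<^sup>\<bottom>) ` {1..k} - A. \<forall>u\<in>U. \<forall>v\<in>V. orthogonal u v))"
  using e_in_W1[of 0] two_le_m k_pos e0_not_orthogonal_W
  by (simp only: orthogonal_comp_H)
    (intro common_nonorthogonal_vector_no_orthogonal_split[of "e 0" "W 1"]; auto)

lemma H_slices_closed_eq_sphere:
  assumes "E \<subseteq> sphere 0 1" "E \<noteq> {}"
    and "\<forall>j\<in>{1..k}. \<forall>x\<in>E. sphere 0 1 \<inter> (\<lambda>v. v + x) ` ((H j)\<^sup>\<bottom>) \<subseteq> E"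
  shows "E = sphere 0 1"
proof (rule sphere_transitive_sphere_eq[OF sphere_transitive_W assms(1,2)])
  fix V x assume "V \<in> W ` {1..k}" "x \<in> E"
  then obtain j where "j \<in> {1..k}" "V = W j" by blast
  then show "sphere 0 1 \<inter> (\<lambda>v. v + x) ` V \<subseteq> E"
    using bspec[OF bspec[OF assms(3) \<open>j \<in> {1..k}\<close>] \<open>x \<in> E\<close>] by simp
qed

lemma rotation_invariant_Union_spheres:
  assumes invariant: "\<forall>j\<in>{1..k}. \<forall>Q. rotation_fixing Q (H j) \<longrightarrow> (\<lambda>y. Q *v y) ` F \<subseteq> F"
  shows "\<exists>R. F = (\<Union>r\<in>R. sphere 0 r)"
proof -
  have "z \<in> F" if "j \<in> {1..k}" "x \<in> F" "z - x \<in> W j" "norm z = norm x" for j x z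
  proof (rule rotation_invariant_step_closed[OF subspace_W _ _ that(2-4)])
    show "2 \<le> dim (W j)" using that(1) dim_W[of j] two_le_m by simp
  qed (use invariant that(1) in \<open>auto simp: H_def\<close>)
  then have "F = (\<Union>r\<in>norm ` F. sphere 0 r)"
    using W_step_closed_saturated by (intro norm_saturated_Union_spheres) blast
  then show ?thesis by (rule exI)
qed

lemma rot_sym_convex_body_eq_cball:
  assumes "convex_body K" and sym: "\<forall>j\<in>{1..k}. rot_sym (H j) K"
  shows "\<exists>r>0. K = cball 0 r"
proof (rule convex_body_norm_saturated_eq_cball[OF assms(1)])
  have "z \<in> K" if "j \<in> {1..k}" "x \<in> K" "z - x \<in> W j" "norm z = norm x" for j x z
    using sym that(1) by (intro rot_sym_step_closed[OF subspace_W _ that(2-4)]) (auto simp: H_def)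
  then show "y \<in> K" if "x \<in> K" "norm y = norm x" for x y
    using W_step_closed_saturated that by blast
qed

end

theorem corollary4p2:
  fixes i :: nat
  assumes "1 \<le> i" and "i \<le> CARD('n) - 2"
  defines "k \<equiv> nat \<lceil>real CARD('n) / real (CARD('n) - i)\<rceil>"
  shows "\<exists>H :: nat \<Rightarrow> (real^'n) set.
    (\<forall>j\<in>{1..k}. subspace (H j) \<and> dim (H j) = i) \<and>
    \<comment> \<open>(i)\<close>
    span (\<Union>j\<in>{1..k}. (H j)\<^sup>\<bottom>) = UNIV \<and>
    \<not> (\<exists>A \<subseteq> (\<lambda>j. (H j)\<^sup>\<bottom>) ` {1..k}. A \<noteq> {} \<and> (\<lambda>j. (H j)\<^sup>\<bottom>) ` {1..k} - A \<noteq> {} \<and>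
         (\<forall>U\<in>A. \<forall>V\<in>(\<lambda>j. (H j)\<^sup>\<bottom>) ` {1..k} - A. \<forall>u\<in>U. \<forall>v\<in>V. orthogonal u v)) \<and>
    \<comment> \<open>(ii)\<close>
    (\<forall>E. E \<subseteq> sphere 0 1 \<and> E \<noteq> {} \<and> closed E \<and>
        (\<forall>j\<in>{1..k}. \<forall>x\<in>E. sphere 0 1 \<inter> ((\<lambda>v. v + x) ` ((H j)\<^sup>\<bottom>)) \<subseteq> E)
        \<longrightarrow> E = sphere 0 1) \<and>
    \<comment> \<open>(iii)\<close>
    (\<forall>F. closed F \<and> (\<forall>j\<in>{1..k}. \<forall>Q. rotation_fixing Q (H j) \<longrightarrow> (\<lambda>y. Q *v y) ` F \<subseteq> F)
        \<longrightarrow> (\<exists>R::real set. F = (\<Union>r\<in>R. sphere 0 r))) \<and>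
    \<comment> \<open>(iv)\<close>
    (\<forall>K. convex_body K \<and> (\<forall>j\<in>{1..k}. rot_sym (H j) K)
        \<longrightarrow> (\<exists>r>0. K = cball 0 r))"
proof -
  define m where "m = CARD('n) - i"
  have m: "2 \<le> m" "m < CARD('n)" "CARD('n) - m = i" using assms(1,2) by (auto simp: m_def)
  have "real CARD('n) / real m \<le> real k" unfolding k_def m_def[symmetric] by linarith
  then have "real CARD('n) \<le> real k * real m" using m by (simp add: divide_le_eq)
  then have "CARD('n) \<le> k * m" by (simp flip: of_nat_mult)
  moreover obtain enum :: "nat \<Rightarrow> 'n" where "bij_betw enum {0..<CARD('n)} UNIV"
    using ex_bij_betw_nat_finite[of "UNIV :: 'n set"] by auto
  ultimately interpret bridged_blocks enum m k using m by unfold_locales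
  show ?thesis
  proof (intro exI[of _ H] conjI ballI allI impI; (elim conjE)?)
    show "subspace (H j)" "dim (H j) = i" if "j \<in> {1..k}" for j
      using that by (simp_all add: subspace_H dim_H m(3))
  qed (rule span_orthogonal_comp_H orthogonal_comp_H_no_orthogonal_split H_slices_closed_eq_sphere
        rotation_invariant_Union_spheres rot_sym_convex_body_eq_cball; assumption)+
qed

end
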